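(* Let $\mathcal G$ be a synchronous game. There is $C>0$ depending only on $|A|$ such that: if $z^i_a\mapsto X^i_a$ is a unitary $\epsilon$-representation of the SynchBCS algebra $\mathscr B(\mathcal G)$ on $\mathbb C^d$ with respect to $\|\cdot\|_f$ (each $X^i_a$ unitary), then $p^i_a\mapsto\frac12(\mathbb 1-X^i_a)$ is a $C\epsilon$-representation of the synchronous algebra $\mathcal A(\mathcal G)$ with respect to $\|\cdot\|_f$.
   Context: A synchronous game has finite input set $I$, output set $A$ (same for both players) and predicate $V:A\times A\times I\times I\to\{0,1\}$ with $V(a,b|i,i)=0$ whenever $a\ne b$. The synchronous algebra $\mathcal A(\mathcal G)$ has generators $p^i_a$ and relations $(p^i_a)^2=p^i_a=(p^i_a)^*$; $\sum_ap^i_a=1$ for each $i$; $p^i_ap^j_b=0$ whenever $V(a,b|i,j)=0$. The SynchBCS algebra $\mathscr B(\mathcal G)$ has generators $z^i_a$ and relations: $z^i_a=(z^i_a)^*$; $(z^i_a)^2=1$; $\frac12(1+z^i_a+z^j_b-z^i_az^j_b)=1$ whenever $V(a,b|i,j)=0$; $\prod_{a\in A}z^i_a=-1$ for each $i$ (product in a fixed order of $A$); $z^i_az^i_{a'}=z^i_{a'}z^i_a$ for all $a,a'$. $\|A\|_f=\mathrm{tr}(A^*A)^{1/2}/\sqrt d$ is the little Frobenius norm on $M_d(\mathbb C)$. An $\epsilon$-representation is an assignment of matrices to generators (extended to a unital $*$-homomorphism of the free $*$-algebra) with $\|\phi(r)\|_f\le\epsilon$ for every defining relation $r$, a relation $a=b$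 meaning $r=a-b$. *)

theory Defs
  imports "Jordan_Normal_Form.Matrix"
begin

definition adj :: "complex mat \<Rightarrow> complex mat" where
  "adj M = mat (dim_col M) (dim_row M) (\<lambda>(i,j). cnj (M $$ (j,i)))"

definition mtrace :: "complex mat \<Rightarrow> complex" where
  "mtrace M = (\<Sum>i<dim_row M. M $$ (i,i))"

definition fnorm :: "complex mat \<Rightarrow> real" where
  "fnorm M = sqrt (Re (mtrace (adj M * M))) / sqrt (real (dim_row M))"

definition unitary_mat :: "nat \<Rightarrow> complex mat \<Rightarrow> bool" where
  "unitary_mat d U \<longleftrightarrow> U \<in> carrier_mat d d \<and> adj U * U = 1\<^sub>m d \<and> U * adj U = 1\<^sub>m d"

definition msum :: "nat \<Rightarrow> (nat \<Rightarrow> complex mat) \<Rightarrow> nat set \<Rightarrow> complex mat" where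
  "msum d f S = foldr (\<lambda>a M. f a + M) (sorted_list_of_set S) (0\<^sub>m d d)"

definition mprod :: "nat \<Rightarrow> (nat \<Rightarrow> complex mat) \<Rightarrow> nat set \<Rightarrow> complex mat" where
  "mprod d f S = foldr (\<lambda>a M. f a * M) (sorted_list_of_set S) (1\<^sub>m d)"

text \<open>Synchronous game with inputs I, outputs A, predicate V a b i j = V(a,b|i,j).\<close>
definition synchronous_game :: "nat set \<Rightarrow> nat set \<Rightarrow> (nat \<Rightarrow> nat \<Rightarrow> nat \<Rightarrow> nat \<Rightarrow> bool) \<Rightarrow> bool" where
  "synchronous_game I A V \<longleftrightarrow> finite I \<and> finite A \<and>
     (\<forall>i\<in>I. \<forall>a\<in>A. \<forall>b\<in>A. a \<noteq> b \<longrightarrow> \<not> V a b i i)"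

definition bcs_eps_rep ::
  "nat set \<Rightarrow> nat set \<Rightarrow> (nat \<Rightarrow> nat \<Rightarrow> nat \<Rightarrow> nat \<Rightarrow> bool) \<Rightarrow> nat \<Rightarrow> real \<Rightarrow> (nat \<Rightarrow> nat \<Rightarrow> complex mat) \<Rightarrow> bool" where
  "bcs_eps_rep I A V d \<epsilon> X \<longleftrightarrow>
     (\<forall>i\<in>I. \<forall>a\<in>A. X i a \<in> carrier_mat d d) \<and>
     (\<forall>i\<in>I. \<forall>a\<in>A. fnorm (X i a - adj (X i a)) \<le> \<epsilon>) \<and>
     (\<forall>i\<in>I. \<forall>a\<in>A. fnorm (X i a * X i a - 1\<^sub>m d) \<le> \<epsilon>) \<and>
     (\<forall>i\<in>I. \<forall>j\<in>I. \<forall>a\<in>A. \<forall>b\<in>A. \<not> V a b i j \<longrightarrow>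
        fnorm ((1/2 :: complex) \<cdot>\<^sub>m (1\<^sub>m d + X i a + X j b - X i a * X j b) - 1\<^sub>m d) \<le> \<epsilon>) \<and>
     (\<forall>i\<in>I. fnorm (mprod d (X i) A - (- 1\<^sub>m d)) \<le> \<epsilon>) \<and>
     (\<forall>i\<in>I. \<forall>a\<in>A. \<forall>a'\<in>A. fnorm (X i a * X i a' - X i a' * X i a) \<le> \<epsilon>)"

definition sync_eps_rep ::
  "nat set \<Rightarrow> nat set \<Rightarrow> (nat \<Rightarrow> nat \<Rightarrow> nat \<Rightarrow> nat \<Rightarrow> bool) \<Rightarrow> nat \<Rightarrow> real \<Rightarrow> (nat \<Rightarrow> nat \<Rightarrow> complex mat) \<Rightarrow> bool" where
  "sync_eps_rep I A V d \<epsilon> P \<longleftrightarrow>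
     (\<forall>i\<in>I. \<forall>a\<in>A. P i a \<in> carrier_mat d d) \<and>
     (\<forall>i\<in>I. \<forall>a\<in>A. fnorm (P i a * P i a - P i a) \<le> \<epsilon>) \<and>
     (\<forall>i\<in>I. \<forall>a\<in>A. fnorm (P i a - adj (P i a)) \<le> \<epsilon>) \<and>
     (\<forall>i\<in>I. fnorm (msum d (P i) A - 1\<^sub>m d) \<le> \<epsilon>) \<and>
     (\<forall>i\<in>I. \<forall>j\<in>I. \<forall>a\<in>A. \<forall>b\<in>A. \<not> V a b i j \<longrightarrow> fnorm (P i a * P j b - 0\<^sub>m d d) \<le> \<epsilon>)"

end

theory Submission
  imports Defs "HOL-Analysis.L2_Norm"
begin

text \<open>
  Put \<open>P\<^sub>a = (1 - X\<^sub>a)/2\<close>. The idempotence, self-adjointness and orthogonality defects of the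
  \<open>P\<^sub>a\<close> are constant multiples of the involution, self-adjointness and constraint defects of
  the \<open>X\<^sub>a\<close>, so they are bounded by \<open>\<epsilon>\<close> directly. For \<open>\<Sum>\<^sub>a P\<^sub>a = 1\<close>, expand the ordered product
  \<open>\<Prod>\<^sub>a X\<^sub>a = \<Prod>\<^sub>a (1 - 2P\<^sub>a)\<close> one factor at a time: peeling off \<open>X\<^sub>a\<close> costs only cross terms
  \<open>P\<^sub>a P\<^sub>b\<close> with \<open>a \<noteq> b\<close>, each of size at most \<open>\<epsilon>/2\<close>, while the accumulated error is merely
  multiplied by the unitary \<open>X\<^sub>a\<close>, which preserves the little Frobenius norm. Hence
  \<open>\<Prod>\<^sub>a X\<^sub>a\<close> is within \<open>|A|(|A| - 1)\<epsilon>\<close> of \<open>1 - 2\<Sum>\<^sub>a P\<^sub>a\<close>, and the relation \<open>\<Prod>\<^sub>a X\<^sub>a = -1\<close> gives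
  \<open>\<Sum>\<^sub>a P\<^sub>a \<approx> 1\<close> up to \<open>O(|A|\<^sup>2\<epsilon>)\<close>.
\<close>

lemma adj_carrier_mat [simp]: "M \<in> carrier_mat m n \<Longrightarrow> adj M \<in> carrier_mat n m"
  by (auto simp: adj_def)

lemma dim_row_adj [simp]: "dim_row (adj M) = dim_col M"
  and dim_col_adj [simp]: "dim_col (adj M) = dim_row M"
  by (auto simp: adj_def)

lemma index_adj [simp]: "i < dim_col M \<Longrightarrow> j < dim_row M \<Longrightarrow> adj M $$ (i, j) = cnj (M $$ (j, i))"
  by (auto simp: adj_def)

lemma minus_zero_mat [simp]: "A \<in> carrier_mat m n \<Longrightarrow> A - 0\<^sub>m m n = (A :: 'a :: group_add mat)"
  by (rule eq_matI) auto

lemma adj_mult: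
  assumes "A \<in> carrier_mat m n" and "B \<in> carrier_mat n k"
  shows "adj (A * B) = adj B * adj A"
  by (rule eq_matI) (use assms in \<open>auto simp: scalar_prod_def cnj_sum mult.commute intro!: sum.cong\<close>)

lemma fnorm_eq_L2_set:
  assumes "M \<in> carrier_mat m n"
  shows "fnorm M = L2_set (\<lambda>p. cmod (M $$ p)) ({..<m} \<times> {..<n}) / sqrt (real m)"
proof -
  have "mtrace (adj M * M) = (\<Sum>j<n. \<Sum>i<m. cnj (M $$ (i, j)) * M $$ (i, j))"
    using assms by (auto simp: mtrace_def scalar_prod_def atLeast0LessThan intro!: sum.cong)
  also have "\<dots> = (\<Sum>j<n. \<Sum>i<m. complex_of_real ((cmod (M $$ (i, j)))\<^sup>2))"
    by (intro sum.cong refl) (simp add: complex_norm_square mult.commute del: of_real_power)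
  finally have "Re (mtrace (adj M * M)) = (\<Sum>j<n. \<Sum>i<m. (cmod (M $$ (i, j)))\<^sup>2)"
    by (simp add: Re_sum)
  also have "\<dots> = (\<Sum>p\<in>{..<m} \<times> {..<n}. (cmod (M $$ p))\<^sup>2)"
    by (subst sum.swap) (simp add: sum.cartesian_product)
  finally show ?thesis
    using assms by (simp add: fnorm_def L2_set_def)
qed

lemma fnorm_nonneg: "0 \<le> fnorm M"
  unfolding fnorm_eq_L2_set[OF carrier_mat_triv] by (simp add: L2_set_nonneg)

lemma fnorm_zero_mat: "fnorm (0\<^sub>m m n) = 0"
  by (auto simp: fnorm_eq_L2_set[of _ m n] L2_set_def intro!: sum.neutral)

lemma fnorm_smult: "fnorm (c \<cdot>\<^sub>m M) = cmod c * fnorm M"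
proof -
  let ?D = "{..<dim_row M} \<times> {..<dim_col M}"
  have "L2_set (\<lambda>p. cmod ((c \<cdot>\<^sub>m M) $$ p)) ?D = L2_set (\<lambda>p. cmod c * cmod (M $$ p)) ?D"
    by (rule L2_set_cong) (auto simp: norm_mult)
  then show ?thesis
    by (simp add: fnorm_eq_L2_set[OF carrier_mat_triv] fnorm_eq_L2_set[of "c \<cdot>\<^sub>m M" "dim_row M" "dim_col M"]
        L2_set_right_distrib)
qed

lemma fnorm_triangle:
  assumes "M \<in> carrier_mat m n" and "N \<in> carrier_mat m n"
  shows "fnorm (M + N) \<le> fnorm M + fnorm N"
proof -
  let ?L2 = "\<lambda>f. L2_set f ({..<m} \<times> {..<n})"
  have "?L2 (\<lambda>p. cmod ((M + N) $$ p)) \<le> ?L2 (\<lambda>p. cmod (M $$ p) + cmod (N $$ p))"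
    by (rule L2_set_mono) (use assms in \<open>auto intro: norm_triangle_ineq\<close>)
  also have "\<dots> \<le> ?L2 (\<lambda>p. cmod (M $$ p)) + ?L2 (\<lambda>p. cmod (N $$ p))"
    by (rule L2_set_triangle_ineq)
  finally show ?thesis
    using assms by (simp add: fnorm_eq_L2_set[of M m n] fnorm_eq_L2_set[of N m n]
        fnorm_eq_L2_set[of "M + N" m n] add_divide_distrib[symmetric] divide_right_mono)
qed

lemma fnorm_diff_le:
  assumes "M \<in> carrier_mat m n" and "N \<in> carrier_mat m n"
  shows "fnorm (M - N) \<le> fnorm M + fnorm N"
proof -
  have "M - N = M + (-1) \<cdot>\<^sub>m N"
    by (rule eq_matI) (use assms in auto)
  moreover have "fnorm (M + (-1) \<cdot>\<^sub>m N) \<le> fnorm M + fnorm ((-1) \<cdot>\<^sub>m N)"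
    by (rule fnorm_triangle) (use assms in auto)
  ultimately show ?thesis
    by (simp add: fnorm_smult)
qed

lemma fnorm_mult_unitary_left:
  assumes "unitary_mat d U" and "M \<in> carrier_mat d n"
  shows "fnorm (U * M) = fnorm M"
proof -
  have U: "U \<in> carrier_mat d d" and "adj U * U = 1\<^sub>m d"
    using assms(1) by (auto simp: unitary_mat_def)
  have "adj (U * M) * (U * M) = adj M * ((adj U * U) * M)"
    using U assms(2) by (simp add: adj_mult assoc_mult_mat[of _ n d _ d _ n] assoc_mult_mat[of _ d d _ d _ n])
  also have "\<dots> = adj M * M"
    unfolding \<open>adj U * U = 1\<^sub>m d\<close> using assms(2) by simp
  finally have "adj (U * M) * (U * M) = adj M * M" .
  then show ?thesis
    using U assms(2) by (simp add: fnorm_def)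
qed

definition proj_of_sym :: "nat \<Rightarrow> complex mat \<Rightarrow> complex mat" where
  "proj_of_sym d X = (1/2) \<cdot>\<^sub>m (1\<^sub>m d - X)"

context
  fixes d :: nat
begin

text \<open>The distributive laws with all dimensions fixed to \<open>d\<close>, so that the simplifier can
  discharge their carrier premises.\<close>

lemmas square_mat_distribs =
  mult_add_distrib_mat[where nr = d and n = d and nc = d]
  add_mult_distrib_mat[where nr = d and n = d and nc = d]
  mult_minus_distrib_mat[where nr = d and n = d and nc = d]
  minus_mult_distrib_mat[where nr = d and n = d and nc = d]
  mult_smult_distrib[where nr = d and n = d and nc = d]
  mult_smult_assoc_mat[where nr = d and n = d and nc = d]

lemma proj_of_sym_carrier [simp]: "X \<in> carrier_mat d d \<Longrightarrow> proj_of_sym d X \<in> carrier_mat d d"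
  by (simp add: proj_of_sym_def minus_carrier_mat)

lemma proj_of_sym_idem_defect:
  assumes "X \<in> carrier_mat d d"
  shows "proj_of_sym d X * proj_of_sym d X - proj_of_sym d X = (1/4) \<cdot>\<^sub>m (X * X - 1\<^sub>m d)"
  using assms unfolding proj_of_sym_def
  by (simp add: square_mat_distribs minus_carrier_mat, intro eq_matI) (auto simp: algebra_simps)

lemma proj_of_sym_adj_defect:
  assumes "X \<in> carrier_mat d d"
  shows "proj_of_sym d X - adj (proj_of_sym d X) = (-1/2) \<cdot>\<^sub>m (X - adj X)"
  using assms unfolding proj_of_sym_def by (intro eq_matI) (auto simp: algebra_simps)

lemma proj_of_sym_mult:
  assumes "X \<in> carrier_mat d d" and "Y \<in> carrier_mat d d"
  shows "proj_of_sym d X * proj_of_sym d Y = (-1/2) \<cdot>\<^sub>m ((1/2) \<cdot>\<^sub>m (1\<^sub>m d + X + Y - X * Y) - 1\<^sub>m d)"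
  using assms unfolding proj_of_sym_def
  by (simp add: square_mat_distribs minus_carrier_mat, intro eq_matI) (auto simp: algebra_simps)

lemma sym_mult_defect_eq:
  assumes "X \<in> carrier_mat d d" and "R \<in> carrier_mat d d" and "S \<in> carrier_mat d d"
  shows "X * R - (1\<^sub>m d - 2 \<cdot>\<^sub>m (proj_of_sym d X + S))
    = X * (R - (1\<^sub>m d - 2 \<cdot>\<^sub>m S)) + 4 \<cdot>\<^sub>m (proj_of_sym d X * S)"
  using assms unfolding proj_of_sym_def
  by (simp add: square_mat_distribs minus_carrier_mat, intro eq_matI) (auto simp: algebra_simps)

end

lemma fnorm_proj_of_sym_idem_defect:
  "X \<in> carrier_mat d d \<Longrightarrow>
    fnorm (proj_of_sym d X * proj_of_sym d X - proj_of_sym d X) = fnorm (X * X - 1\<^sub>m d) / 4"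
  by (simp add: proj_of_sym_idem_defect fnorm_smult)

lemma fnorm_proj_of_sym_adj_defect:
  "X \<in> carrier_mat d d \<Longrightarrow> fnorm (proj_of_sym d X - adj (proj_of_sym d X)) = fnorm (X - adj X) / 2"
  by (simp add: proj_of_sym_adj_defect fnorm_smult)

lemma fnorm_proj_of_sym_mult:
  "X \<in> carrier_mat d d \<Longrightarrow> Y \<in> carrier_mat d d \<Longrightarrow>
    fnorm (proj_of_sym d X * proj_of_sym d Y) = fnorm ((1/2) \<cdot>\<^sub>m (1\<^sub>m d + X + Y - X * Y) - 1\<^sub>m d) / 2"
  by (simp add: proj_of_sym_mult fnorm_smult)

lemma foldr_add_carrier_mat:
  "\<forall>b\<in>set L. P b \<in> carrier_mat m n \<Longrightarrow> foldr (\<lambda>b S. P b + S) L (0\<^sub>m m n) \<in> carrier_mat m n"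
  by (induction L) auto

lemma foldr_mult_carrier_mat:
  "\<forall>b\<in>set L. X b \<in> carrier_mat d d \<Longrightarrow> foldr (\<lambda>b M. X b * M) L (1\<^sub>m d) \<in> carrier_mat d d"
  by (induction L) auto

lemma fnorm_mult_foldr_add_le:
  assumes "M \<in> carrier_mat m d" and "\<forall>b\<in>set L. P b \<in> carrier_mat d n"
    and "\<forall>b\<in>set L. fnorm (M * P b) \<le> \<delta>"
  shows "fnorm (M * foldr (\<lambda>b S. P b + S) L (0\<^sub>m d n)) \<le> real (length L) * \<delta>"
  using assms(2,3)
proof (induction L)
  case Nil
  then show ?case
    using assms(1) by (simp add: fnorm_zero_mat)
next
  case (Cons b L)
  let ?S = "foldr (\<lambda>b S. P b + S) L (0\<^sub>m d n)"
  have S: "?S \<in> carrier_mat d n" and Pb: "P b \<in> carrier_mat d n"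
    using Cons.prems by (auto intro: foldr_add_carrier_mat)
  have "fnorm (M * (P b + ?S)) = fnorm (M * P b + M * ?S)"
    using assms(1) S Pb by (simp add: mult_add_distrib_mat)
  also have "\<dots> \<le> fnorm (M * P b) + fnorm (M * ?S)"
    using assms(1) S Pb by (intro fnorm_triangle[of _ m n]) auto
  also have "\<dots> \<le> \<delta> + real (length L) * \<delta>"
    using Cons by (intro add_mono) auto
  finally show ?case
    by (simp add: algebra_simps)
qed

lemma fnorm_foldr_mult_minus_proj_of_sym_le:
  assumes "\<forall>a\<in>set L. unitary_mat d (X a)" and "distinct L"
    and "\<forall>a\<in>set L. \<forall>b\<in>set L. a \<noteq> b \<longrightarrow> fnorm (proj_of_sym d (X a) * proj_of_sym d (X b)) \<le> \<delta>"
  shows "fnorm (foldr (\<lambda>a M. X a * M) L (1\<^sub>m d)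
      - (1\<^sub>m d - 2 \<cdot>\<^sub>m foldr (\<lambda>a S. proj_of_sym d (X a) + S) L (0\<^sub>m d d)))
    \<le> 2 * real (length L) * (real (length L) - 1) * \<delta>"
  using assms
proof (induction L)
  case Nil
  show ?case
    by (simp add: minus_r_inv_mat[OF one_carrier_mat] fnorm_zero_mat)
next
  case (Cons a L)
  let ?R = "foldr (\<lambda>a M. X a * M) L (1\<^sub>m d)"
  let ?S = "foldr (\<lambda>a S. proj_of_sym d (X a) + S) L (0\<^sub>m d d)"
  let ?E = "?R - (1\<^sub>m d - 2 \<cdot>\<^sub>m ?S)"
  have carrier: "\<forall>b\<in>set (a # L). X b \<in> carrier_mat d d"
    using Cons.prems(1) by (auto simp: unitary_mat_def)
  then have R: "?R \<in> carrier_mat d d" and S: "?S \<in> carrier_mat d d" and Xa: "X a \<in> carrier_mat d d"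
    by (auto intro: foldr_mult_carrier_mat foldr_add_carrier_mat)
  have PS: "proj_of_sym d (X a) * ?S \<in> carrier_mat d d"
    using Xa S by (simp add: mult_carrier_mat[of _ d d])
  have E: "?E \<in> carrier_mat d d"
    using R S by (simp add: minus_carrier_mat)
  have "fnorm (X a * ?R - (1\<^sub>m d - 2 \<cdot>\<^sub>m (proj_of_sym d (X a) + ?S)))
      = fnorm (X a * ?E + 4 \<cdot>\<^sub>m (proj_of_sym d (X a) * ?S))"
    using Xa R S by (simp add: sym_mult_defect_eq)
  also have "\<dots> \<le> fnorm (X a * ?E) + fnorm (4 \<cdot>\<^sub>m (proj_of_sym d (X a) * ?S))"
    using Xa E PS by (intro fnorm_triangle[of _ d d]) auto
  also have "\<dots> = fnorm ?E + 4 * fnorm (proj_of_sym d (X a) * ?S)"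
    using Cons.prems(1) by (simp add: fnorm_mult_unitary_left[OF _ E] fnorm_smult)
  also have "\<dots> \<le> 2 * real (length L) * (real (length L) - 1) * \<delta> + 4 * (real (length L) * \<delta>)"
  proof (intro add_mono mult_left_mono)
    show "fnorm ?E \<le> 2 * real (length L) * (real (length L) - 1) * \<delta>"
      using Cons by simp
    show "fnorm (proj_of_sym d (X a) * ?S) \<le> real (length L) * \<delta>"
      using Xa carrier Cons.prems(2,3) by (intro fnorm_mult_foldr_add_le[of _ d]) auto
  qed simp
  finally show ?case
    by (simp add: algebra_simps)
qed

lemma fnorm_mprod_minus_msum_proj_of_sym_le:
  assumes "finite A" and "\<forall>a\<in>A. unitary_mat d (X a)"
    and "\<forall>a\<in>A. \<forall>b\<in>A. a \<noteq> b \<longrightarrow> fnorm (proj_of_sym d (X a) * proj_of_sym d (X b)) \<le> \<delta>"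
  shows "fnorm (mprod d X A - (1\<^sub>m d - 2 \<cdot>\<^sub>m msum d (\<lambda>a. proj_of_sym d (X a)) A))
    \<le> 2 * real (card A) * (real (card A) - 1) * \<delta>"
  using fnorm_foldr_mult_minus_proj_of_sym_le[of "sorted_list_of_set A" d X \<delta>] assms
  by (simp add: mprod_def msum_def)

lemma fnorm_msum_proj_of_sym_minus_one_le:
  assumes "finite A" and "\<forall>a\<in>A. unitary_mat d (X a)"
    and "\<forall>a\<in>A. \<forall>b\<in>A. a \<noteq> b \<longrightarrow> fnorm (proj_of_sym d (X a) * proj_of_sym d (X b)) \<le> \<delta>"
  shows "fnorm (msum d (\<lambda>a. proj_of_sym d (X a)) A - 1\<^sub>m d)
    \<le> (2 * real (card A) * (real (card A) - 1) * \<delta> + fnorm (mprod d X A - (- 1\<^sub>m d))) / 2"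
proof -
  let ?R = "mprod d X A" and ?S = "msum d (\<lambda>a. proj_of_sym d (X a)) A"
  have "\<forall>a\<in>A. X a \<in> carrier_mat d d"
    using assms(2) by (auto simp: unitary_mat_def)
  then have R: "?R \<in> carrier_mat d d" and S: "?S \<in> carrier_mat d d"
    using assms(1) unfolding mprod_def msum_def
    by (auto intro: foldr_mult_carrier_mat foldr_add_carrier_mat)
  have "?S - 1\<^sub>m d = (1/2) \<cdot>\<^sub>m ((?R - (1\<^sub>m d - 2 \<cdot>\<^sub>m ?S)) - (?R - (- 1\<^sub>m d)))"
    by (rule eq_matI) (use R S in \<open>auto simp: algebra_simps\<close>)
  then have "fnorm (?S - 1\<^sub>m d) = fnorm ((?R - (1\<^sub>m d - 2 \<cdot>\<^sub>m ?S)) - (?R - (- 1\<^sub>m d))) / 2"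
    by (simp add: fnorm_smult)
  also have "\<dots> \<le> (fnorm (?R - (1\<^sub>m d - 2 \<cdot>\<^sub>m ?S)) + fnorm (?R - (- 1\<^sub>m d))) / 2"
    using R S by (intro divide_right_mono fnorm_diff_le[of _ d d]) (auto simp: minus_carrier_mat)
  also have "\<dots> \<le> (2 * real (card A) * (real (card A) - 1) * \<delta> + fnorm (?R - (- 1\<^sub>m d))) / 2"
    by (intro divide_right_mono add_right_mono fnorm_mprod_minus_msum_proj_of_sym_le[OF assms]) simp
  finally show ?thesis .
qed

lemma bcs_eps_rep_nonneg: "bcs_eps_rep I A V d \<epsilon> X \<Longrightarrow> I \<noteq> {} \<Longrightarrow> 0 \<le> \<epsilon>"
  using fnorm_nonneg order_trans unfolding bcs_eps_rep_def by blast

lemma sync_eps_rep_proj_of_sym: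
  assumes game: "synchronous_game I A V" and unitary: "\<forall>i\<in>I. \<forall>a\<in>A. unitary_mat d (X i a)"
    and rep: "bcs_eps_rep I A V d \<epsilon> X" and eps: "0 \<le> \<epsilon>"
  shows "sync_eps_rep I A V d ((real (card A)^2 + 1) * \<epsilon>) (\<lambda>i a. proj_of_sym d (X i a))"
proof -
  let ?C = "real (card A)^2 + 1"
  have carrier: "X i a \<in> carrier_mat d d"
    and self_adj: "fnorm (X i a - adj (X i a)) \<le> \<epsilon>"
    and involution: "fnorm (X i a * X i a - 1\<^sub>m d) \<le> \<epsilon>"
    if "i \<in> I" and "a \<in> A" for i a
    using rep that by (simp_all add: bcs_eps_rep_def)
  have product: "fnorm (mprod d (X i) A - (- 1\<^sub>m d)) \<le> \<epsilon>" if "i \<in> I" for i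
    using rep that by (simp add: bcs_eps_rep_def)
  have orth: "fnorm (proj_of_sym d (X i a) * proj_of_sym d (X j b)) \<le> \<epsilon> / 2"
    if "i \<in> I" "j \<in> I" "a \<in> A" "b \<in> A" "\<not> V a b i j" for i j a b
    using rep that carrier by (simp add: bcs_eps_rep_def fnorm_proj_of_sym_mult)
  have eps_le_C: "\<epsilon> \<le> ?C * \<epsilon>"
    using eps by (simp add: distrib_right)
  show ?thesis
    unfolding sync_eps_rep_def
  proof (intro conjI ballI impI)
    fix i a
    assume i: "i \<in> I" and a: "a \<in> A"
    show "proj_of_sym d (X i a) \<in> carrier_mat d d"
      using carrier[OF i a] by simp
    show "fnorm (proj_of_sym d (X i a) * proj_of_sym d (X i a) - proj_of_sym d (X i a)) \<le> ?C * \<epsilon>"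
      using involution[OF i a] eps eps_le_C by (simp add: fnorm_proj_of_sym_idem_defect[OF carrier[OF i a]])
    show "fnorm (proj_of_sym d (X i a) - adj (proj_of_sym d (X i a))) \<le> ?C * \<epsilon>"
      using self_adj[OF i a] eps eps_le_C by (simp add: fnorm_proj_of_sym_adj_defect[OF carrier[OF i a]])
  next
    fix i j a b
    assume ijab: "i \<in> I" "j \<in> I" "a \<in> A" "b \<in> A" "\<not> V a b i j"
    then show "fnorm (proj_of_sym d (X i a) * proj_of_sym d (X j b) - 0\<^sub>m d d) \<le> ?C * \<epsilon>"
      using orth[OF ijab] carrier eps eps_le_C by (simp add: mult_carrier_mat[of _ d d])
  next
    fix i
    assume i: "i \<in> I"
    have "finite A" and "\<forall>a\<in>A. \<forall>b\<in>A. a \<noteq> b \<longrightarrow> \<not> V a b i i"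
      using game i by (auto simp: synchronous_game_def)
    then have "fnorm (msum d (\<lambda>a. proj_of_sym d (X i a)) A - 1\<^sub>m d)
        \<le> (2 * real (card A) * (real (card A) - 1) * (\<epsilon> / 2) + fnorm (mprod d (X i) A - (- 1\<^sub>m d))) / 2"
      using unitary i orth[OF i i] by (intro fnorm_msum_proj_of_sym_minus_one_le) blast+
    also have "\<dots> \<le> (2 * real (card A) * (real (card A) - 1) * (\<epsilon> / 2) + \<epsilon>) / 2"
      using product[OF i] by (intro divide_right_mono add_left_mono) auto
    also have "\<dots> \<le> ?C * \<epsilon>"
      using eps by (auto simp: power2_eq_square field_simps intro!: add_nonneg_nonneg mult_nonneg_nonneg)
    finally show "fnorm (msum d (\<lambda>a. proj_of_sym d (X i a)) A - 1\<^sub>m d) \<le> ?C * \<epsilon>" .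
  qed
qed

theorem mainTheorem14:
  fixes n :: nat
  shows "\<exists>C>0. \<forall>(I::nat set) (A::nat set) V d (\<epsilon>::real) X.
     synchronous_game I A V \<and> card A = n \<and>
     (\<forall>i\<in>I. \<forall>a\<in>A. unitary_mat d (X i a)) \<and>
     bcs_eps_rep I A V d \<epsilon> X \<longrightarrow>
     sync_eps_rep I A V d (C * \<epsilon>) (\<lambda>i a. (1/2 :: complex) \<cdot>\<^sub>m (1\<^sub>m d - X i a))"
proof (rule exI[of _ "real n ^ 2 + 1"], intro conjI allI impI)
  show "0 < real n ^ 2 + 1"
    by (simp add: add_nonneg_pos)
  fix I A :: "nat set" and V d and \<epsilon> :: real and X :: "nat \<Rightarrow> nat \<Rightarrow> complex mat"
  assume "synchronous_game I A V \<and> card A = n \<and> (\<forall>i\<in>I. \<forall>a\<in>A. unitary_mat d (X i a)) \<and>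
    bcs_eps_rep I A V d \<epsilon> X"
  then have game: "synchronous_game I A V" and card: "card A = n"
    and unitary: "\<forall>i\<in>I. \<forall>a\<in>A. unitary_mat d (X i a)" and rep: "bcs_eps_rep I A V d \<epsilon> X"
    by blast+
  show "sync_eps_rep I A V d ((real n ^ 2 + 1) * \<epsilon>) (\<lambda>i a. (1/2 :: complex) \<cdot>\<^sub>m (1\<^sub>m d - X i a))"
  proof (cases "I = {}")
    case True
    then show ?thesis
      by (simp add: sync_eps_rep_def)
  next
    case False
    with rep have "0 \<le> \<epsilon>"
      by (rule bcs_eps_rep_nonneg)
    from sync_eps_rep_proj_of_sym[OF game unitary rep this] show ?thesis
      unfolding card proj_of_sym_def .
  qed
qed

end
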